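(* Let $k\ge 1$ and let $v_0,\pi_1,v_1,\dots,\pi_k$ be generated by Approximate Value Iteration with errors $\epsilon_1,\dots,\epsilon_{k-1}$ (for any choice of greedy policies at each step). Let $\epsilon=\max_{1\le j<k}\operatorname{span}(\epsilon_j)$ (with $\epsilon=0$ if $k=1$). Then $$\|v_*-v_{\pi_k}\|_\infty \le \frac{1}{1-\gamma}\left(\frac{\gamma-\gamma^k}{1-\gamma}\,\epsilon+\gamma^k\operatorname{span}(v_*-v_0)\right).$$
   Context: A Markov Decision Process with finite state space $S$, finite action space $A$, reward function $r(s,a)$, transition probabilities $p(s'|s,a)$ and discount factor $\gamma\in[0,1)$. For a (deterministic, stationary) policy $\pi:S\to A$, let $r_\pi(s)=r(s,\pi(s))$, let $P_\pi$ be the stochastic matrix $P_\pi(s,s')=p(s'|s,\pi(s))$, and let $T_\pi v=r_\pi+\gamma P_\pi v$ be the Bellman operator of $\pi$; $v_\pi$ is its unique fixed point (the expected $\gamma$-discounted total reward of $\pi$). The Bellman optimality operator is $Tv=\max_\pi T_\pi v$ (componentwise), $v_*$ is its fixed point (the optimal value), and a policy $\pi$ is greedy with respect to $v$ if $T_\pi v=Tv$. For a function $f:S\to\mathbb R$, $\operatorname{span}(f)=\max_s f(s)-\min_s f(s)$. Approximate Value Iteration: starting from an arbitrary $v_0:S\to\mathbb R$, for $j\ge 0$ pick any policy $\pi_{j+1}$ greedy with respect to $v_j$ and set $v_{j+1}=T_{\pi_{j+1}}v_j+\epsilon_{j+1}$, where $\epsilon_{j+1}:S\to\mathbb R$ are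 arbitrary error terms. *)

theory Defs
  imports Complex_Main
begin

text \<open>Finite MDP: states 's::finite, actions 'a::finite, reward r s a,
transition probabilities p s a s' = p(s'|s,a), discount factor g.\<close>

definition valid_mdp :: "('s::finite \<Rightarrow> 'a::finite \<Rightarrow> 's \<Rightarrow> real) \<Rightarrow> real \<Rightarrow> bool" where
  "valid_mdp p g \<longleftrightarrow> (\<forall>s a s'. 0 \<le> p s a s') \<and> (\<forall>s a. (\<Sum>s'\<in>UNIV. p s a s') = 1)
     \<and> 0 \<le> g \<and> g < 1"

definition T_pol :: "('s::finite \<Rightarrow> 'a \<Rightarrow> real) \<Rightarrow> ('s \<Rightarrow> 'a \<Rightarrow> 's \<Rightarrow> real) \<Rightarrow> real
    \<Rightarrow> ('s \<Rightarrow> 'a) \<Rightarrow> ('s \<Rightarrow> real) \<Rightarrow> 's \<Rightarrow> real" where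
  "T_pol r p g pol v s = r s (pol s) + g * (\<Sum>s'\<in>UNIV. p s (pol s) s' * v s')"

definition v_pol :: "('s::finite \<Rightarrow> 'a \<Rightarrow> real) \<Rightarrow> ('s \<Rightarrow> 'a \<Rightarrow> 's \<Rightarrow> real) \<Rightarrow> real
    \<Rightarrow> ('s \<Rightarrow> 'a) \<Rightarrow> 's \<Rightarrow> real" where
  "v_pol r p g pol = (THE v. T_pol r p g pol v = v)"

definition T_opt :: "('s::finite \<Rightarrow> 'a::finite \<Rightarrow> real) \<Rightarrow> ('s \<Rightarrow> 'a \<Rightarrow> 's \<Rightarrow> real) \<Rightarrow> real
    \<Rightarrow> ('s \<Rightarrow> real) \<Rightarrow> 's \<Rightarrow> real" where
  "T_opt r p g v s = Max (range (\<lambda>pol. T_pol r p g pol v s))"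

definition v_opt :: "('s::finite \<Rightarrow> 'a::finite \<Rightarrow> real) \<Rightarrow> ('s \<Rightarrow> 'a \<Rightarrow> 's \<Rightarrow> real) \<Rightarrow> real
    \<Rightarrow> 's \<Rightarrow> real" where
  "v_opt r p g = (THE v. T_opt r p g v = v)"

definition greedy :: "('s::finite \<Rightarrow> 'a::finite \<Rightarrow> real) \<Rightarrow> ('s \<Rightarrow> 'a \<Rightarrow> 's \<Rightarrow> real) \<Rightarrow> real
    \<Rightarrow> ('s \<Rightarrow> 'a) \<Rightarrow> ('s \<Rightarrow> real) \<Rightarrow> bool" where
  "greedy r p g pol v \<longleftrightarrow> T_pol r p g pol v = T_opt r p g v"

definition fspan :: "('s::finite \<Rightarrow> real) \<Rightarrow> real" where
  "fspan f = Max (range f) - Min (range f)"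

definition supnorm :: "('s::finite \<Rightarrow> real) \<Rightarrow> real" where
  "supnorm f = Max (range (\<lambda>s. \<bar>f s\<bar>))"

end

theory Submission imports Defs begin

(*
  The argument is the classical span-seminorm analysis.
  (1) Rows of the transition kernel are probability vectors, so averaging
      against them stays between Min and Max.  Hence both Bellman operators
      satisfy the sandwich  g*Min(x-y) <= T x - T y <= g*Max(x-y)  and are
      g-contractions in the sup-norm.
  (2) A sup-norm contraction on functions over a finite set has a unique
      fixed point (Banach's theorem, proved directly here), so v_pi and v_*
      are genuinely the fixed points of T_pi and T.
  (3) One AVI step contracts the span of the error:
        span(v_* - v_{j+1}) <= g * span(v_* - v_j) + span(eps_{j+1}).
  (4) A policy greedy with respect to w loses at most
        0 <= v_* - v_pi <= g/(1-g) * span(v_* - w).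
  Unrolling (3) as a linear recursion and applying (4) to the last
  iterate gives the theorem.
*)

lemma range_Max_ge: "f s \<le> Max (range (f::'s::finite \<Rightarrow> real))"
  by (rule Max_ge) auto

lemma range_Max_le: "(\<And>s. f s \<le> B) \<Longrightarrow> Max (range (f::'s::finite \<Rightarrow> real)) \<le> B"
  by (subst Max_le_iff) auto

lemma range_Min_le: "Min (range (f::'s::finite \<Rightarrow> real)) \<le> f s"
  by (rule Min_le) auto

lemma range_Min_ge: "(\<And>s. B \<le> f s) \<Longrightarrow> B \<le> Min (range (f::'s::finite \<Rightarrow> real))"
  by (subst Min_ge_iff) auto

lemma range_Max_attained: "\<exists>s. Max (range (f::'s::finite \<Rightarrow> real)) = f s"
proof -
  have "Max (range f) \<in> range f" by (rule Max_in) auto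
  then show ?thesis by (metis rangeE)
qed

lemma range_Min_attained: "\<exists>s. Min (range (f::'s::finite \<Rightarrow> real)) = f s"
proof -
  have "Min (range f) \<in> range f" by (rule Min_in) auto
  then show ?thesis by (metis rangeE)
qed

lemma row_average_le_Max:
  assumes "valid_mdp p g" shows "(\<Sum>s'\<in>UNIV. p s a s' * f s') \<le> Max (range f)"
proof -
  have "(\<Sum>s'\<in>UNIV. p s a s' * f s') \<le> (\<Sum>s'\<in>UNIV. p s a s' * Max (range f))"
    using assms by (intro sum_mono mult_left_mono range_Max_ge) (auto simp: valid_mdp_def)
  also have "\<dots> = Max (range f)"
    using assms by (simp add: valid_mdp_def flip: sum_distrib_right)
  finally show ?thesis .
qed

lemma row_average_ge_Min:
  assumes "valid_mdp p g" shows "Min (range f) \<le> (\<Sum>s'\<in>UNIV. p s a s' * f s')"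
proof -
  have "Min (range f) = (\<Sum>s'\<in>UNIV. p s a s' * Min (range f))"
    using assms by (simp add: valid_mdp_def flip: sum_distrib_right)
  also have "\<dots> \<le> (\<Sum>s'\<in>UNIV. p s a s' * f s')"
    using assms by (intro sum_mono mult_left_mono range_Min_le) (auto simp: valid_mdp_def)
  finally show ?thesis .
qed

section \<open>Bellman operators\<close>

lemma T_opt_ge_T_pol: "T_pol r p g pol v s \<le> T_opt r p g v s"
  unfolding T_opt_def by (rule Max_ge) auto

lemma T_opt_attained: "\<exists>pol. T_opt r p g v s = T_pol r p g pol v s"
proof -
  have "T_opt r p g v s \<in> range (\<lambda>pol. T_pol r p g pol v s)"
    unfolding T_opt_def by (rule Max_in) auto
  then show ?thesis by auto
qed

lemma T_pol_diff: "T_pol r p g pol x s - T_pol r p g pol y s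
   = g * (\<Sum>s'\<in>UNIV. p s (pol s) s' * (x s' - y s'))"
  by (simp add: T_pol_def right_diff_distrib sum_subtractf)

lemma T_pol_diff_bounds:
  assumes "valid_mdp p g"
  shows "g * Min (range (\<lambda>s. x s - y s)) \<le> T_pol r p g pol x s - T_pol r p g pol y s"
    and "T_pol r p g pol x s - T_pol r p g pol y s \<le> g * Max (range (\<lambda>s. x s - y s))"
  using assms unfolding T_pol_diff
  by (auto intro!: mult_left_mono row_average_ge_Min row_average_le_Max simp: valid_mdp_def)

text \<open>The same sandwich for the optimality operator: compare with the policy
  attaining the maximum on one side.\<close>
lemma T_opt_diff_bounds:
  assumes "valid_mdp p g"
  shows "g * Min (range (\<lambda>s. x s - y s)) \<le> T_opt r p g x s - T_opt r p g y s"
    and "T_opt r p g x s - T_opt r p g y s \<le> g * Max (range (\<lambda>s. x s - y s))"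
proof -
  obtain \<sigma> where "T_opt r p g y s = T_pol r p g \<sigma> y s" using T_opt_attained by blast
  then show "g * Min (range (\<lambda>s. x s - y s)) \<le> T_opt r p g x s - T_opt r p g y s"
    using T_pol_diff_bounds(1)[OF assms, where pol=\<sigma> and x=x and y=y and r=r and s=s]
      T_opt_ge_T_pol[of r p g \<sigma> x s] by linarith
next
  obtain \<sigma> where "T_opt r p g x s = T_pol r p g \<sigma> x s" using T_opt_attained by blast
  then show "T_opt r p g x s - T_opt r p g y s \<le> g * Max (range (\<lambda>s. x s - y s))"
    using T_pol_diff_bounds(2)[OF assms, where pol=\<sigma> and x=x and y=y and r=r and s=s]
      T_opt_ge_T_pol[of r p g \<sigma> y s] by linarith
qed

section \<open>Sup-norm contractions and their fixed points\<close>

definition sup_contraction :: "real \<Rightarrow> (('s \<Rightarrow> real) \<Rightarrow> 's \<Rightarrow> real) \<Rightarrow> bool" where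
  "sup_contraction c F \<longleftrightarrow>
     (\<forall>x y B. (\<forall>s. \<bar>x s - y s\<bar> \<le> B) \<longrightarrow> (\<forall>s. \<bar>F x s - F y s\<bar> \<le> c * B))"

lemma sandwich_imp_sup_contraction:
  fixes F :: "('s::finite \<Rightarrow> real) \<Rightarrow> 's \<Rightarrow> real"
  assumes g: "0 \<le> g"
    and lo: "\<And>x y s. g * Min (range (\<lambda>s. x s - y s)) \<le> F x s - F y s"
    and hi: "\<And>x y s. F x s - F y s \<le> g * Max (range (\<lambda>s. x s - y s))"
  shows "sup_contraction g F"
  unfolding sup_contraction_def
proof (intro allI impI)
  fix x y :: "'s \<Rightarrow> real" and B s
  assume B: "\<forall>s. \<bar>x s - y s\<bar> \<le> B"
  have "x s - y s \<le> B" "-B \<le> x s - y s" for s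
    using B[rule_format, of s] by linarith+
  then have "Max (range (\<lambda>s. x s - y s)) \<le> B" "-B \<le> Min (range (\<lambda>s. x s - y s))"
    by (auto intro: range_Max_le range_Min_ge)
  then have "g * Max (range (\<lambda>s. x s - y s)) \<le> g * B" "g * (-B) \<le> g * Min (range (\<lambda>s. x s - y s))"
    using g by (simp_all add: mult_left_mono del: mult_minus_right)
  then show "\<bar>F x s - F y s\<bar> \<le> g * B"
    using lo[where x=x and y=y and s=s] hi[where x=x and y=y and s=s] by auto
qed

text \<open>Uniqueness: the distance B between two fixed points satisfies B <= c*B.\<close>
lemma sup_contraction_fixpoint_unique:
  fixes F :: "('s::finite \<Rightarrow> real) \<Rightarrow> 's \<Rightarrow> real"
  assumes c: "c < 1" and F: "sup_contraction c F" and w: "F w = w" and v: "F v = v"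
  shows "w = v"
proof -
  define B where "B = Max (range (\<lambda>s. \<bar>w s - v s\<bar>))"
  have Bs: "\<bar>w s - v s\<bar> \<le> B" for s unfolding B_def by (rule range_Max_ge)
  obtain s0 where s0: "B = \<bar>w s0 - v s0\<bar>" unfolding B_def using range_Max_attained by blast
  have "B \<le> c * B" using F Bs s0 w v unfolding sup_contraction_def by metis
  then have "B \<le> 0" using c by (simp add: mult_le_cancel_right1 not_less)
  then show "w = v" using Bs by (intro ext) (meson abs_le_zero_iff eq_iff_diff_eq_0 order_trans)
qed

text \<open>Banach's fixed point theorem for sup-norm contractions on functions over a
  finite set: the Picard iterates converge pointwise (their increments are
  geometrically small), and the limit is fixed because F is continuous
  with respect to pointwise convergence on a finite set.\<close>
lemma sup_contraction_fixpoint_exists: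
  fixes F :: "('s::finite \<Rightarrow> real) \<Rightarrow> 's \<Rightarrow> real"
  assumes c0: "0 \<le> c" and c1: "c < 1" and F: "sup_contraction c F"
  shows "\<exists>L. F L = L"
proof -
  define x where "x n = (F ^^ n) (\<lambda>_. 0)" for n
  have x_Suc: "x (Suc n) = F (x n)" for n by (simp add: x_def)
  define D where "D = Max (range (\<lambda>s. \<bar>x 1 s - x 0 s\<bar>))"
  have increment: "\<bar>x (Suc n) s - x n s\<bar> \<le> c ^ n * D" for n s
  proof (induction n arbitrary: s)
    case 0 then show ?case unfolding D_def using range_Max_ge[of "\<lambda>s. \<bar>x 1 s - x 0 s\<bar>"] by simp
  next
    case (Suc n)
    then have "\<bar>F (x (Suc n)) s - F (x n) s\<bar> \<le> c * (c ^ n * D)"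
      using F unfolding sup_contraction_def x_Suc by blast
    then show ?case by (simp add: x_Suc mult.assoc)
  qed
  define L where "L s = x 0 s + (\<Sum>i. x (Suc i) s - x i s)" for s
  have x_to_L: "(\<lambda>n. x n s) \<longlonglongrightarrow> L s" for s
  proof -
    have "summable (\<lambda>i. c ^ i * D)" using c0 c1 by (simp add: summable_mult2)
    then have "summable (\<lambda>i. x (Suc i) s - x i s)"
      by (rule summable_comparison_test'[where N=0]) (use increment in auto)
    then have "(\<lambda>n. x 0 s + (\<Sum>i<n. x (Suc i) s - x i s)) \<longlonglongrightarrow> L s"
      unfolding L_def by (intro tendsto_add tendsto_const summable_LIMSEQ)
    moreover have "x 0 s + (\<Sum>i<n. x (Suc i) s - x i s) = x n s" for n
      using sum_lessThan_telescope[of "\<lambda>i. x i s" n] by simp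
    ultimately show ?thesis by simp
  qed
  define dist_L where "dist_L n = (\<Sum>t\<in>UNIV. \<bar>L t - x n t\<bar>)" for n
  have "dist_L \<longlonglongrightarrow> (\<Sum>t\<in>UNIV. \<bar>L t - L t\<bar>)"
    unfolding dist_L_def by (intro tendsto_sum tendsto_rabs tendsto_diff tendsto_const x_to_L)
  then have dist_L_0: "dist_L \<longlonglongrightarrow> 0" by simp
  have "F L = L"
  proof
    fix s
    have "\<bar>L t - x n t\<bar> \<le> dist_L n" for n t
      unfolding dist_L_def by (rule member_le_sum) auto
    then have "\<bar>F (x n) s - F L s\<bar> \<le> c * dist_L n" for n
      using F unfolding sup_contraction_def by (metis abs_minus_commute)
    moreover have "0 \<le> dist_L n" for n unfolding dist_L_def by (simp add: sum_nonneg)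
    ultimately have "norm (x (Suc n) s - F L s) \<le> norm (dist_L n) * c" for n
      by (simp add: x_Suc mult.commute)
    then have "(\<lambda>n. x (Suc n) s - F L s) \<longlonglongrightarrow> 0"
      by (intro tendsto_0_le[OF dist_L_0] always_eventually) auto
    then have "(\<lambda>n. x (Suc n) s) \<longlonglongrightarrow> F L s" by (rule LIM_zero_cancel)
    moreover have "(\<lambda>n. x (Suc n) s) \<longlonglongrightarrow> L s" using x_to_L by (rule LIMSEQ_Suc)
    ultimately show "F L s = L s" by (rule LIMSEQ_unique)
  qed
  then show ?thesis by blast
qed

lemma sup_contraction_The_fixpoint:
  fixes F :: "('s::finite \<Rightarrow> real) \<Rightarrow> 's \<Rightarrow> real"
  assumes "0 \<le> c" "c < 1" "sup_contraction c F"
  shows "F (THE v. F v = v) = (THE v. F v = v)"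
proof -
  obtain L where "F L = L" using sup_contraction_fixpoint_exists[OF assms] by blast
  then have "\<exists>!v. F v = v" using sup_contraction_fixpoint_unique[OF assms(2,3)] by blast
  then show ?thesis by (rule theI')
qed

lemma v_pol_fixpoint:
  assumes mdp: "valid_mdp p g"
  shows "T_pol r p g pol (v_pol r p g pol) = v_pol r p g pol"
proof -
  have "sup_contraction g (T_pol r p g pol)"
    using mdp T_pol_diff_bounds[OF mdp]
    by (intro sandwich_imp_sup_contraction) (auto simp: valid_mdp_def)
  then show ?thesis
    unfolding v_pol_def using mdp by (intro sup_contraction_The_fixpoint) (auto simp: valid_mdp_def)
qed

lemma v_opt_fixpoint:
  assumes mdp: "valid_mdp p g"
  shows "T_opt r p g (v_opt r p g) = v_opt r p g"
proof -
  have "sup_contraction g (T_opt r p g)"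
    using mdp T_opt_diff_bounds[OF mdp]
    by (intro sandwich_imp_sup_contraction) (auto simp: valid_mdp_def)
  then show ?thesis
    unfolding v_opt_def using mdp by (intro sup_contraction_The_fixpoint) (auto simp: valid_mdp_def)
qed

text \<open>The fixed point of the optimality operator dominates every fixed point
  of a policy operator: at a state where v_* - v_pi is minimal, the
  minimum m satisfies m \<ge> g m.\<close>
lemma opt_fixpoint_dominates:
  assumes mdp: "valid_mdp p g"
    and vs: "T_opt r p g vs = vs" and vp: "T_pol r p g pol vp = vp"
  shows "vp s \<le> vs s"
proof -
  have g1: "g < 1" using mdp by (simp add: valid_mdp_def)
  define y where "y s = vs s - vp s" for s
  obtain s0 where s0: "Min (range y) = y s0" using range_Min_attained by blast
  have "T_pol r p g pol vs s0 - T_pol r p g pol vp s0 \<le> y s0"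
    unfolding y_def using fun_cong[OF vs, of s0] fun_cong[OF vp, of s0]
      T_opt_ge_T_pol[of r p g pol vs s0] by linarith
  then have "g * Min (range y) \<le> Min (range y)"
    using T_pol_diff_bounds(1)[OF mdp, of vs vp r pol s0] s0 unfolding y_def by simp
  then have "0 \<le> (1 - g) * Min (range y)" by (simp add: algebra_simps)
  then have "0 \<le> Min (range y)" using g1 by (simp add: zero_le_mult_iff)
  then show ?thesis using range_Min_le[of y s] unfolding y_def by linarith
qed

text \<open>At a state where
  y = v_* - v_pi is maximal, comparing with the policy optimal for
  v_* gives Max y \<le> g span(v_* - w) + g Max y.\<close>
lemma greedy_policy_loss:
  assumes mdp: "valid_mdp p g"
    and vs: "T_opt r p g vs = vs" and vp: "T_pol r p g pol vp = vp"
    and gr: "greedy r p g pol w"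
  shows "vs s - vp s \<le> g * fspan (\<lambda>s. vs s - w s) / (1 - g)"
proof -
  have g0: "0 \<le> g" and g1: "g < 1" using mdp by (auto simp: valid_mdp_def)
  define y where "y s = vs s - vp s" for s
  define d where "d s = vs s - w s" for s
  have y_step: "y t \<le> g * fspan d + g * Max (range y)" for t
  proof -
    obtain \<sigma> where \<sigma>: "T_opt r p g vs t = T_pol r p g \<sigma> vs t" using T_opt_attained by blast
    have greedy_t: "T_pol r p g pol w t = T_opt r p g w t" using gr unfolding greedy_def by simp
    have "y t \<le> (T_pol r p g \<sigma> vs t - T_pol r p g \<sigma> w t) + (T_pol r p g pol w t - T_pol r p g pol vp t)"
      unfolding y_def using \<sigma> greedy_t fun_cong[OF vs, of t] fun_cong[OF vp, of t]
        T_opt_ge_T_pol[of r p g \<sigma> w t] by linarith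
    also have "\<dots> = g * ((\<Sum>s'\<in>UNIV. p t (\<sigma> t) s' * d s') - (\<Sum>s'\<in>UNIV. p t (pol t) s' * d s'))
        + g * (\<Sum>s'\<in>UNIV. p t (pol t) s' * y s')"
      unfolding T_pol_diff y_def d_def by (simp add: algebra_simps sum_subtractf)
    also have "\<dots> \<le> g * fspan d + g * Max (range y)"
      using row_average_le_Max[OF mdp, of t "\<sigma> t" d] row_average_ge_Min[OF mdp, of d t "pol t"]
        row_average_le_Max[OF mdp, of t "pol t" y] g0
      unfolding fspan_def by (intro add_mono mult_left_mono) auto
    finally show ?thesis .
  qed
  obtain s1 where "Max (range y) = y s1" using range_Max_attained by blast
  then have "(1 - g) * Max (range y) \<le> g * fspan d" using y_step[of s1] by (simp add: algebra_simps)
  then have "Max (range y) \<le> g * fspan d / (1 - g)" using g1 by (simp add: field_simps)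
  then show ?thesis using range_Max_ge[of y s] unfolding y_def d_def by simp
qed

lemma avi_step_span:
  assumes mdp: "valid_mdp p g"
    and vs: "T_opt r p g vs = vs"
    and gr: "greedy r p g pol w"
    and w': "w' = (\<lambda>s. T_pol r p g pol w s + e s)"
  shows "fspan (\<lambda>s. vs s - w' s) \<le> g * fspan (\<lambda>s. vs s - w s) + fspan e"
proof -
  have diff: "vs s - w' s = (T_opt r p g vs s - T_opt r p g w s) - e s" for s
    using fun_cong[OF vs, of s] gr by (simp add: w' greedy_def)
  have "Max (range (\<lambda>s. vs s - w' s)) \<le> g * Max (range (\<lambda>s. vs s - w s)) - Min (range e)"
    unfolding diff using T_opt_diff_bounds(2)[OF mdp, where r=r and x=vs and y=w] range_Min_le[of e]
    by (intro range_Max_le) (smt (verit))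
  moreover have "g * Min (range (\<lambda>s. vs s - w s)) - Max (range e) \<le> Min (range (\<lambda>s. vs s - w' s))"
    unfolding diff using T_opt_diff_bounds(1)[OF mdp, where r=r and x=vs and y=w] range_Max_ge[of e]
    by (intro range_Min_ge) (smt (verit))
  ultimately show ?thesis unfolding fspan_def by (simp add: algebra_simps)
qed

lemma linear_recursion_bound:
  fixes a :: "nat \<Rightarrow> real"
  assumes g0: "0 \<le> g" and g1: "g \<noteq> 1"
    and step: "\<And>j. j < n \<Longrightarrow> a (Suc j) \<le> g * a j + E"
  shows "a n \<le> g ^ n * a 0 + E * (1 - g ^ n) / (1 - g)"
  using step
proof (induction n)
  case 0 then show ?case by simp
next
  case (Suc n)
  have "a (Suc n) \<le> g * (g ^ n * a 0 + E * (1 - g ^ n) / (1 - g)) + E"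
    using Suc g0 by (intro order_trans[OF Suc.prems[of n]] add_mono mult_left_mono) auto
  also have "\<dots> = g ^ Suc n * a 0 + E * (1 - g ^ Suc n) / (1 - g)"
    using g1 by (simp add: field_simps)
  finally show ?case .
qed

theorem theorem1:
  fixes r :: "'s::finite \<Rightarrow> 'a::finite \<Rightarrow> real"
    and p :: "'s \<Rightarrow> 'a \<Rightarrow> 's \<Rightarrow> real"
    and g :: real
    and v :: "nat \<Rightarrow> 's \<Rightarrow> real"
    and pol :: "nat \<Rightarrow> 's \<Rightarrow> 'a"
    and err :: "nat \<Rightarrow> 's \<Rightarrow> real"
    and k :: nat
  assumes mdp: "valid_mdp p g"
    and k: "1 \<le> k"
    and greedy_steps: "\<forall>j<k. greedy r p g (pol (Suc j)) (v j)"
    and updates: "\<forall>j. Suc j < k \<longrightarrow> v (Suc j) = (\<lambda>s. T_pol r p g (pol (Suc j)) (v j) s + err (Suc j) s)"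
  shows "supnorm (\<lambda>s. v_opt r p g s - v_pol r p g (pol k) s)
     \<le> 1 / (1 - g) * ((g - g ^ k) / (1 - g)
          * (if k = 1 then 0 else Max ((\<lambda>j. fspan (err j)) ` {1..<k}))
        + g ^ k * fspan (\<lambda>s. v_opt r p g s - v 0 s))"
proof -
  have g0: "0 \<le> g" and g1: "g < 1" using mdp by (auto simp: valid_mdp_def)
  obtain m where km: "k = Suc m" using k by (cases k) auto
  define vs where "vs = v_opt r p g"
  define E where "E = (if k = 1 then 0 else Max ((\<lambda>j. fspan (err j)) ` {1..<k}))"
  have vs_fix: "T_opt r p g vs = vs" unfolding vs_def by (rule v_opt_fixpoint[OF mdp])
  have err_le_E: "fspan (err (Suc j)) \<le> E" if "j < m" for j
    using that km unfolding E_def by (auto intro: Max_ge)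
  have span_m: "fspan (\<lambda>s. vs s - v m s) \<le> g ^ m * fspan (\<lambda>s. vs s - v 0 s) + E * (1 - g ^ m) / (1 - g)"
  proof (rule linear_recursion_bound[OF g0])
    fix j assume j: "j < m"
    have "fspan (\<lambda>s. vs s - v (Suc j) s) \<le> g * fspan (\<lambda>s. vs s - v j s) + fspan (err (Suc j))"
      using j km greedy_steps updates by (intro avi_step_span[OF mdp vs_fix]) auto
    then show "fspan (\<lambda>s. vs s - v (Suc j) s) \<le> g * fspan (\<lambda>s. vs s - v j s) + E"
      using err_le_E[OF j] by linarith
  qed (use g1 in simp)
  have vp_fix: "T_pol r p g (pol k) (v_pol r p g (pol k)) = v_pol r p g (pol k)"
    by (rule v_pol_fixpoint[OF mdp])
  have greedy_k: "greedy r p g (pol k) (v m)" using greedy_steps km by simp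
  have "g * fspan (\<lambda>s. vs s - v m s) / (1 - g)
      \<le> g * (g ^ m * fspan (\<lambda>s. vs s - v 0 s) + E * (1 - g ^ m) / (1 - g)) / (1 - g)"
    using span_m g0 g1 by (intro divide_right_mono mult_left_mono) auto
  also have "\<dots> = 1 / (1 - g) * ((g - g ^ k) / (1 - g) * E + g ^ k * fspan (\<lambda>s. vs s - v 0 s))"
    unfolding km using g1 by (simp add: field_simps)
  finally have "\<bar>vs s - v_pol r p g (pol k) s\<bar>
      \<le> 1 / (1 - g) * ((g - g ^ k) / (1 - g) * E + g ^ k * fspan (\<lambda>s. vs s - v 0 s))" for s
    using opt_fixpoint_dominates[OF mdp vs_fix vp_fix, of s]
      greedy_policy_loss[OF mdp vs_fix vp_fix greedy_k, of s] by linarith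
  then show ?thesis unfolding supnorm_def E_def vs_def by (intro range_Max_le)
qed

end
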